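(* Let $G$ be a finite abelian group (written multiplicatively), let $R \subseteq \mathbb{Q}$ be a subring, and let $n \in \mathbb{N}$. The map \[ f: R \otimes_{\mathbb{Z}} Q_n(\mathbb{Z},G) \to Q_n(R,G), \qquad r\otimes\Big(\sum_{g\in G} \alpha_g [g] + I(\mathbb{Z}, G)^{n+1}\Big) \mapsto \sum_{g\in G} r\alpha_g [g] + I(R, G)^{n+1} \] is a well-defined isomorphism of $R$-modules, where $R \otimes_{\mathbb{Z}} Q_n(\mathbb{Z},G)$ is regarded as an $R$-module by extension of scalars.
   Context: For a ring $A$ (commutative with identity) and a group $G$, $A[G]$ denotes the group algebra and $[g]$ the element $g\in G$ viewed in $A[G]$. The augmentation map $\mathrm{aug}: A[G]\to A$ is the $A$-linear map with $[g]\mapsto 1$ for all $g\in G$; the augmentation ideal is $I(A,G) = \ker(\mathrm{aug})$, and $Q_n(A,G) = I(A,G)^n / I(A,G)^{n+1}$. *)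

theory Defs
  imports Complex_Main
begin

text \<open>The finite abelian group G is a type of class finite and ab_group_add; its
group law is written additively (g + h) although the paper writes it multiplicatively.
Elements of the group algebra A[G] (A a subring, given as a set of a commutative ring type)
are functions G to A; the function x stands for the sum over g of x g [g].\<close>

definition galg :: "'a::comm_ring_1 set \<Rightarrow> ('g \<Rightarrow> 'a) set" where
  "galg A = {x. \<forall>g. x g \<in> A}"

definition gadd :: "('g \<Rightarrow> 'a::comm_ring_1) \<Rightarrow> ('g \<Rightarrow> 'a) \<Rightarrow> 'g \<Rightarrow> 'a" where
  "gadd x y = (\<lambda>g. x g + y g)"

definition gsmul :: "'a::comm_ring_1 \<Rightarrow> ('g \<Rightarrow> 'a) \<Rightarrow> 'g \<Rightarrow> 'a" where
  "gsmul c x = (\<lambda>g. c * x g)"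

text \<open>Multiplication in A[G]: [g][h] = [g+h], i.e. convolution.\<close>
definition gmult :: "('g::{finite,ab_group_add} \<Rightarrow> 'a::comm_ring_1) \<Rightarrow> ('g \<Rightarrow> 'a) \<Rightarrow> 'g \<Rightarrow> 'a" where
  "gmult x y = (\<lambda>k. \<Sum>g\<in>UNIV. x g * y (k - g))"

definition aug :: "('g::finite \<Rightarrow> 'a::comm_ring_1) \<Rightarrow> 'a" where
  "aug x = (\<Sum>g\<in>UNIV. x g)"

definition augI :: "'a::comm_ring_1 set \<Rightarrow> ('g::finite \<Rightarrow> 'a) set" where
  "augI A = {x \<in> galg A. aug x = 0}"

inductive_set idealprod ::
  "('g::{finite,ab_group_add} \<Rightarrow> 'a::comm_ring_1) set \<Rightarrow> ('g \<Rightarrow> 'a) set \<Rightarrow> ('g \<Rightarrow> 'a) set"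
  for P :: "('g \<Rightarrow> 'a) set" and J :: "('g \<Rightarrow> 'a) set" where
  zero: "(\<lambda>_. 0) \<in> idealprod P J"
| prod: "x \<in> P \<Longrightarrow> y \<in> J \<Longrightarrow> gmult x y \<in> idealprod P J"
| add: "u \<in> idealprod P J \<Longrightarrow> v \<in> idealprod P J \<Longrightarrow> gadd u v \<in> idealprod P J"
| neg: "u \<in> idealprod P J \<Longrightarrow> (\<lambda>g. - u g) \<in> idealprod P J"

fun augpow :: "'a::comm_ring_1 set \<Rightarrow> nat \<Rightarrow> ('g::{finite,ab_group_add} \<Rightarrow> 'a) set" where
  "augpow A 0 = galg A"
| "augpow A (Suc n) = idealprod (augpow A n) (augI A)"

text \<open>Q_n(A,G) = I^n / I^(n+1), elements are cosets.\<close>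
definition Qcoset :: "'a::comm_ring_1 set \<Rightarrow> nat \<Rightarrow> ('g::{finite,ab_group_add} \<Rightarrow> 'a) \<Rightarrow> ('g \<Rightarrow> 'a) set" where
  "Qcoset A n x = {gadd x y | y. y \<in> augpow A (Suc n)}"

definition Qn :: "'a::comm_ring_1 set \<Rightarrow> nat \<Rightarrow> ('g::{finite,ab_group_add} \<Rightarrow> 'a) set set" where
  "Qn A n = Qcoset A n ` augpow A n"

definition Qadd :: "('g \<Rightarrow> 'a::comm_ring_1) set \<Rightarrow> ('g \<Rightarrow> 'a) set \<Rightarrow> ('g \<Rightarrow> 'a) set" where
  "Qadd X Y = {gadd x y | x y. x \<in> X \<and> y \<in> Y}"

definition Qsmul :: "'a::comm_ring_1 set \<Rightarrow> nat \<Rightarrow> 'a \<Rightarrow> ('g::{finite,ab_group_add} \<Rightarrow> 'a) set \<Rightarrow> ('g \<Rightarrow> 'a) set" where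
  "Qsmul A n c X = {gadd (gsmul c x) y | x y. x \<in> X \<and> y \<in> augpow A (Suc n)}"

text \<open>Construction: free abelian group on R \<times> M (finitely supported integer-valued
functions) modulo the subgroup generated by the bilinearity relations.\<close>

definition supp :: "('p \<Rightarrow> int) \<Rightarrow> 'p set" where
  "supp c = {p. c p \<noteq> 0}"

definition tfree :: "'r set \<Rightarrow> 'm set \<Rightarrow> ('r \<times> 'm \<Rightarrow> int) set" where
  "tfree R M = {c. finite (supp c) \<and> supp c \<subseteq> R \<times> M}"

definition delta :: "'p \<Rightarrow> 'p \<Rightarrow> int" where
  "delta p = (\<lambda>q. if q = p then 1 else 0)"

definition fadd :: "('p \<Rightarrow> int) \<Rightarrow> ('p \<Rightarrow> int) \<Rightarrow> 'p \<Rightarrow> int" where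
  "fadd c d = (\<lambda>q. c q + d q)"

definition fdiff :: "('p \<Rightarrow> int) \<Rightarrow> ('p \<Rightarrow> int) \<Rightarrow> 'p \<Rightarrow> int" where
  "fdiff c d = (\<lambda>q. c q - d q)"

inductive_set trel :: "'r::ab_group_add set \<Rightarrow> 'm set \<Rightarrow> ('m \<Rightarrow> 'm \<Rightarrow> 'm) \<Rightarrow> ('r \<times> 'm \<Rightarrow> int) set"
  for R :: "'r set" and M :: "'m set" and addM :: "'m \<Rightarrow> 'm \<Rightarrow> 'm" where
  zero: "(\<lambda>_. 0) \<in> trel R M addM"
| lin1: "r \<in> R \<Longrightarrow> r' \<in> R \<Longrightarrow> m \<in> M \<Longrightarrow>
     fdiff (delta (r + r', m)) (fadd (delta (r, m)) (delta (r', m))) \<in> trel R M addM"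
| lin2: "r \<in> R \<Longrightarrow> m \<in> M \<Longrightarrow> m' \<in> M \<Longrightarrow>
     fdiff (delta (r, addM m m')) (fadd (delta (r, m)) (delta (r, m'))) \<in> trel R M addM"
| add: "u \<in> trel R M addM \<Longrightarrow> v \<in> trel R M addM \<Longrightarrow> fadd u v \<in> trel R M addM"
| neg: "u \<in> trel R M addM \<Longrightarrow> (\<lambda>q. - u q) \<in> trel R M addM"

definition tcls :: "'r::ab_group_add set \<Rightarrow> 'm set \<Rightarrow> ('m \<Rightarrow> 'm \<Rightarrow> 'm) \<Rightarrow> ('r \<times> 'm \<Rightarrow> int) \<Rightarrow> ('r \<times> 'm \<Rightarrow> int) set" where
  "tcls R M addM c = {fadd c d | d. d \<in> trel R M addM}"

definition tens :: "'r::ab_group_add set \<Rightarrow> 'm set \<Rightarrow> ('m \<Rightarrow> 'm \<Rightarrow> 'm) \<Rightarrow> ('r \<times> 'm \<Rightarrow> int) set set" where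
  "tens R M addM = tcls R M addM ` tfree R M"

definition tadd :: "('p \<Rightarrow> int) set \<Rightarrow> ('p \<Rightarrow> int) set \<Rightarrow> ('p \<Rightarrow> int) set" where
  "tadd X Y = {fadd c d | c d. c \<in> X \<and> d \<in> Y}"

text \<open>Extension of scalars: s \<cdot> (r \<otimes> m) = (s r) \<otimes> m, extended additively.\<close>
definition tsm :: "'r::comm_ring_1 \<Rightarrow> ('r \<times> 'm \<Rightarrow> int) \<Rightarrow> 'r \<times> 'm \<Rightarrow> int" where
  "tsm s c = (\<lambda>q. \<Sum>p\<in>supp c. c p * delta (s * fst p, snd p) q)"

definition tsmul :: "'r::comm_ring_1 set \<Rightarrow> 'm set \<Rightarrow> ('m \<Rightarrow> 'm \<Rightarrow> 'm) \<Rightarrow> 'r \<Rightarrow> ('r \<times> 'm \<Rightarrow> int) set \<Rightarrow> ('r \<times> 'm \<Rightarrow> int) set" where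
  "tsmul R M addM s X = {fadd (tsm s c) d | c d. c \<in> X \<and> d \<in> trel R M addM}"

text \<open>For an element c of the free group (formal sum of c p times fst p \<otimes> snd p),
fval collects all cosets  sum_p c p * fst p * x_p + I(R,G)^(n+1)  over all choices of
representatives x_p of the cosets snd p.  Well-definedness of f means this is a single
coset independent of the representatives and of the element of the tensor class.\<close>
definition fval :: "rat set \<Rightarrow> nat \<Rightarrow> (rat \<times> ('g::{finite,ab_group_add} \<Rightarrow> int) set \<Rightarrow> int) \<Rightarrow> ('g \<Rightarrow> rat) set" where
  "fval R n c = {gadd (\<lambda>g. \<Sum>p\<in>supp c. of_int (c p) * fst p * of_int (\<rho> p g)) y | \<rho> y.
       (\<forall>p\<in>supp c. \<rho> p \<in> snd p) \<and> y \<in> augpow R (Suc n)}"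

definition Fmap :: "rat set \<Rightarrow> nat \<Rightarrow> (rat \<times> ('g::{finite,ab_group_add} \<Rightarrow> int) set \<Rightarrow> int) set \<Rightarrow> ('g \<Rightarrow> rat) set" where
  "Fmap R n X = (\<Union>c\<in>X. fval R n c)"

definition subring_rat :: "rat set \<Rightarrow> bool" where
  "subring_rat R \<longleftrightarrow> 1 \<in> R \<and> (\<forall>x\<in>R. \<forall>y\<in>R. x + y \<in> R \<and> x * y \<in> R \<and> - x \<in> R)"

end

theory Submission
  imports Defs "HOL-Library.Function_Algebras"
begin

text \<open>
  Since R \<subseteq> \<rat>, a Bezout argument shows that if a/b \<in> R in lowest terms then 1/b \<in> R, and finitely
  many elements of R have a common such denominator. Inducting over the generators of the ideal
  powers, every y \<in> I(R,G)^k is then (1/e) w with 1/e \<in> R and w \<in> I(\<int>,G)^k, so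
  y + I(R,G)^(n+1) is the image of (1/e) \<otimes> [w] and f is onto.

  For injectivity, bilinearity and a common denominator D of the coefficients collapse every
  tensor to a pure tensor (1/D) \<otimes> [x]. If its image (1/D) x lies in I(R,G)^(n+1), clearing
  denominators once more gives e x = D w with w \<in> I(\<int>,G)^(n+1), hence
  (1/D) \<otimes> [x] = (1/(D e)) \<otimes> [e x] = (1/(D e)) \<otimes> [D w] = 0.

  f is well defined because evaluating r \<otimes> m at any representative of m turns the bilinearity
  relations into elements of I(R,G)^(n+1).
\<close>

definition add_subgroup :: "'a::ab_group_add set \<Rightarrow> bool" where
  "add_subgroup H \<longleftrightarrow> 0 \<in> H \<and> (\<forall>u\<in>H. \<forall>v\<in>H. u - v \<in> H)"

lemma add_subgroupI:
  assumes "0 \<in> H" "\<And>u v. u \<in> H \<Longrightarrow> v \<in> H \<Longrightarrow> u + v \<in> H" "\<And>u. u \<in> H \<Longrightarrow> - u \<in> H"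
  shows "add_subgroup H"
  using assms unfolding add_subgroup_def by (metis diff_conv_add_uminus)

lemma add_subgroup_zero: "add_subgroup H \<Longrightarrow> 0 \<in> H"
  by (simp add: add_subgroup_def)

lemma add_subgroup_diff: "add_subgroup H \<Longrightarrow> u \<in> H \<Longrightarrow> v \<in> H \<Longrightarrow> u - v \<in> H"
  by (simp add: add_subgroup_def)

lemma add_subgroup_neg: "add_subgroup H \<Longrightarrow> u \<in> H \<Longrightarrow> - u \<in> H"
  using add_subgroup_diff[of H 0 u] by (simp add: add_subgroup_zero)

lemma add_subgroup_add: "add_subgroup H \<Longrightarrow> u \<in> H \<Longrightarrow> v \<in> H \<Longrightarrow> u + v \<in> H"
  using add_subgroup_diff[of H u "- v"] by (simp add: add_subgroup_neg)

lemma add_subgroup_sum: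
  "add_subgroup H \<Longrightarrow> (\<And>i. i \<in> I \<Longrightarrow> f i \<in> H) \<Longrightarrow> (\<Sum>i\<in>I. f i) \<in> H"
  by (induction I rule: infinite_finite_induct) (auto simp: add_subgroup_zero add_subgroup_add)

lemma add_subgroup_of_int_mult:
  fixes u :: "'a::ring_1"
  assumes H: "add_subgroup H" and u: "u \<in> H"
  shows "of_int j * u \<in> H"
proof -
  have nat: "of_nat k * u \<in> H" for k
    by (induction k) (auto simp: algebra_simps add_subgroup_zero[OF H] add_subgroup_add[OF H] u)
  show ?thesis
    by (cases j rule: int_cases2) (auto simp: nat add_subgroup_neg[OF H])
qed

lemma add_subgroup_UNIV: "add_subgroup UNIV"
  by (simp add: add_subgroup_def)

lemma add_subgroup_Int_vimage:
  assumes S: "add_subgroup S" and H: "add_subgroup H"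
    and f: "\<And>x y. x \<in> S \<Longrightarrow> y \<in> S \<Longrightarrow> f (x - y) = f x - f y"
  shows "add_subgroup (S \<inter> f -` H)"
proof -
  have "f 0 = 0" using f[OF add_subgroup_zero[OF S] add_subgroup_zero[OF S]] by simp
  then show ?thesis
    using S H f unfolding add_subgroup_def by (simp add: Ball_def)
qed

lemma add_subgroup_vimage:
  assumes "add_subgroup H" "\<And>x y. f (x - y) = f x - f y"
  shows "add_subgroup (f -` H)"
  using add_subgroup_Int_vimage[OF add_subgroup_UNIV assms(1), where f = f] assms(2) by simp

lemma additive_mod_of_int_mult:
  fixes f :: "'a::ring_1 \<Rightarrow> 'b::ring_1"
  assumes H: "add_subgroup H" and S: "add_subgroup S"
    and additive: "\<And>a b. a \<in> S \<Longrightarrow> b \<in> S \<Longrightarrow> f (a + b) - (f a + f b) \<in> H"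
    and a: "a \<in> S"
  shows "f (of_int j * a) - of_int j * f a \<in> H"
proof -
  have f0: "f 0 \<in> H"
    using add_subgroup_neg[OF H additive[OF add_subgroup_zero[OF S] add_subgroup_zero[OF S]]] by simp
  have nat: "f (of_nat k * a) - of_nat k * f a \<in> H" for k
  proof (induction k)
    case (Suc k)
    have "of_nat k * a \<in> S" using add_subgroup_of_int_mult[OF S a, of "int k"] by simp
    then have "f (of_nat k * a + a) - (f (of_nat k * a) + f a) \<in> H" using a by (rule additive)
    from add_subgroup_add[OF H this Suc.IH] show ?case by (simp add: algebra_simps)
  qed (simp add: f0)
  have neg: "f (- b) + f b \<in> H" if "b \<in> S" for b
    using add_subgroup_diff[OF H f0 additive[OF that add_subgroup_neg[OF S that]]] by simp
  show ?thesis
  proof (cases j rule: int_cases2)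
    case (nonpos k)
    have "of_nat k * a \<in> S" using add_subgroup_of_int_mult[OF S a, of "int k"] by simp
    from add_subgroup_diff[OF H neg[OF this] nat[of k]] nonpos show ?thesis
      by (simp add: algebra_simps)
  qed (simp add: nat)
qed

lemma additive_mod_sum:
  fixes f :: "'a::ring_1 \<Rightarrow> 'b::ring_1"
  assumes H: "add_subgroup H" and S: "add_subgroup S"
    and additive: "\<And>a b. a \<in> S \<Longrightarrow> b \<in> S \<Longrightarrow> f (a + b) - (f a + f b) \<in> H"
    and a: "\<And>i. i \<in> I \<Longrightarrow> a i \<in> S"
  shows "f (\<Sum>i\<in>I. of_int (k i) * a i) - (\<Sum>i\<in>I. of_int (k i) * f (a i)) \<in> H"
  using a
proof (induction I rule: infinite_finite_induct)
  case (insert i I)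
  let ?x = "of_int (k i) * a i" and ?y = "\<Sum>i\<in>I. of_int (k i) * a i"
  have x: "?x \<in> S" and y: "?y \<in> S"
    using insert.prems by (auto intro!: add_subgroup_sum[OF S] add_subgroup_of_int_mult[OF S])
  have "f (?x + ?y) - (f ?x + f ?y) + (f ?x - of_int (k i) * f (a i))
      + (f ?y - (\<Sum>i\<in>I. of_int (k i) * f (a i))) \<in> H"
    using additive[OF x y] additive_mod_of_int_mult[OF H S additive insert.prems[OF insertI1]] insert
    by (intro add_subgroup_add[OF H]) auto
  with insert.hyps show ?case by (simp add: algebra_simps)
qed (use additive_mod_of_int_mult[OF H S additive add_subgroup_zero[OF S], of 0] in simp_all)

section \<open>Subrings of \<rat> and denominators\<close>

definition subring :: "'a::comm_ring_1 set \<Rightarrow> bool" where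
  "subring A \<longleftrightarrow> 1 \<in> A \<and> (\<forall>x\<in>A. \<forall>y\<in>A. x + y \<in> A \<and> x * y \<in> A \<and> - x \<in> A)"

lemma subring_rat_iff_subring: "subring_rat R \<longleftrightarrow> subring R"
  by (simp add: subring_rat_def subring_def)

lemma subring_UNIV: "subring UNIV"
  by (simp add: subring_def)

lemma subring_add_subgroup: "subring A \<Longrightarrow> add_subgroup A"
  unfolding subring_def by (intro add_subgroupI) (auto, metis add.right_inverse)

lemma subring_mult: "subring A \<Longrightarrow> x \<in> A \<Longrightarrow> y \<in> A \<Longrightarrow> x * y \<in> A"
  by (simp add: subring_def)

lemma subring_of_int: "subring A \<Longrightarrow> of_int j \<in> A"
  using add_subgroup_of_int_mult[OF subring_add_subgroup, of A 1 j] by (simp add: subring_def)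

text \<open>Bezout: if a/b \<in> R in lowest terms, then 1/b = u (a/b) + v \<in> R.\<close>

lemma subring_rat_denominator:
  assumes R: "subring R" and r: "(r::rat) \<in> R"
  obtains b :: int where "b > 0" "1 / of_int b \<in> R" "of_int b * r \<in> \<int>"
proof -
  obtain a b where q: "quotient_of r = (a, b)" by (cases "quotient_of r")
  have b: "b > 0" and r_eq: "r = of_int a / of_int b"
    using q quotient_of_denom_pos quotient_of_div by blast+
  obtain u v where uv: "u * a + v * b = 1"
    using q quotient_of_coprime by (metis bezout_int coprime_imp_gcd_eq_1)
  have "1 / of_int b = of_int u * r + (of_int v :: rat)"
  proof -
    have "(of_int (u * a + v * b) :: rat) = 1" using uv by simp
    with b show ?thesis by (simp add: r_eq field_simps)
  qed
  also have "\<dots> \<in> R"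
    using R r by (intro add_subgroup_add[OF subring_add_subgroup] subring_mult subring_of_int) auto
  finally have "1 / of_int b \<in> R" .
  moreover have "of_int b * r \<in> \<int>" using b by (simp add: r_eq)
  ultimately show ?thesis using b that by blast
qed

lemma subring_rat_common_denominator:
  fixes R :: "rat set"
  assumes R: "subring R" and "finite S" "S \<subseteq> R"
  obtains e :: int where "e > 0" "1 / of_int e \<in> R" "\<forall>r\<in>S. of_int e * r \<in> \<int>"
proof -
  from assms(2,3) have "\<exists>e::int. e > 0 \<and> 1 / of_int e \<in> R \<and> (\<forall>r\<in>S. of_int e * r \<in> \<int>)"
  proof (induction S rule: finite_induct)
    case empty
    show ?case using R by (intro exI[of _ 1]) (simp add: subring_def)
  next
    case (insert r S)
    then obtain e :: int where e: "e > 0" "1 / of_int e \<in> R" "\<forall>r\<in>S. of_int e * r \<in> \<int>"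
      by auto
    obtain b :: int where b: "b > 0" "1 / of_int b \<in> R" "of_int b * r \<in> \<int>"
      using subring_rat_denominator[OF R] insert.prems by blast
    have "1 / of_int (e * b) = (1 / of_int e) * (1 / (of_int b :: rat))" by simp
    also have "\<dots> \<in> R" using subring_mult[OF R e(2) b(2)] .
    finally have "1 / of_int (e * b) \<in> R" .
    moreover have "of_int (e * b) * s \<in> \<int>" if "s \<in> insert r S" for s
    proof -
      have "of_int (e * b) * s = of_int e * (of_int b * s)" "of_int (e * b) * s = of_int b * (of_int e * s)"
        by (simp_all add: mult_ac)
      then show ?thesis using that e(3) b(3) by (metis Ints_mult Ints_of_int insert_iff)
    qed
    ultimately show ?case using e(1) b(1) by (intro exI[of _ "e * b"]) auto
  qed
  then show ?thesis using that by blast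
qed

lemma of_int_fun_apply [simp]: "(of_int j :: 'x \<Rightarrow> 'a::ring_1) y = of_int j"
  by (cases j rule: int_cases2) (simp_all add: fun_Compl_def)

lemma gadd_eq_plus: "gadd x y = x + y"
  by (simp add: gadd_def fun_eq_iff)

lemma gsmul_diff: "gsmul s (x - y) = gsmul s x - gsmul s y"
  by (simp add: gsmul_def fun_eq_iff algebra_simps)

lemma gsmul_gmult: "gsmul s (gmult x y) = gmult (gsmul s x) y"
  by (simp add: gsmul_def gmult_def fun_eq_iff sum_distrib_left mult.assoc)

lemma of_int_comp_gmult: "of_int \<circ> gmult x y = gmult (of_int \<circ> x) (of_int \<circ> y)"
  by (simp add: gmult_def fun_eq_iff)

lemma aug_of_int_comp: "aug (of_int \<circ> x) = of_int (aug x)"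
  by (simp add: aug_def)

lemma add_subgroup_galg: "subring A \<Longrightarrow> add_subgroup (galg A)"
  by (intro add_subgroupI) (simp_all add: galg_def subring_add_subgroup add_subgroup_zero
      add_subgroup_add add_subgroup_neg)

lemma gmult_galg: "subring A \<Longrightarrow> x \<in> galg A \<Longrightarrow> y \<in> galg A \<Longrightarrow> gmult x y \<in> galg A"
  unfolding galg_def gmult_def
  by (auto intro!: add_subgroup_sum[OF subring_add_subgroup] subring_mult)

lemma add_subgroup_idealprod: "add_subgroup (idealprod P J)"
proof (rule add_subgroupI)
  show "0 \<in> idealprod P J" using idealprod.zero by (simp add: zero_fun_def)
next
  fix u v assume "u \<in> idealprod P J" "v \<in> idealprod P J"
  then show "u + v \<in> idealprod P J" using idealprod.add by (simp add: gadd_eq_plus)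
next
  fix u assume "u \<in> idealprod P J"
  then show "- u \<in> idealprod P J" using idealprod.neg by (simp add: fun_Compl_def)
qed

lemma idealprod_least:
  assumes "add_subgroup H" "\<And>x y. x \<in> P \<Longrightarrow> y \<in> J \<Longrightarrow> gmult x y \<in> H"
  shows "idealprod P J \<subseteq> H"
proof
  fix u assume "u \<in> idealprod P J"
  then show "u \<in> H"
  proof induction
    case zero
    show ?case using add_subgroup_zero[OF assms(1)] by (simp add: zero_fun_def)
  next
    case (prod x y)
    then show ?case by (rule assms(2))
  next
    case (add u v)
    then show ?case unfolding gadd_eq_plus by (intro add_subgroup_add[OF assms(1)])
  next
    case (neg u)
    then show ?case using add_subgroup_neg[OF assms(1)] by (simp add: fun_Compl_def)
  qed
qed

lemma idealprod_mono: "P \<subseteq> P' \<Longrightarrow> idealprod P J \<subseteq> idealprod P' J"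
  by (intro idealprod_least add_subgroup_idealprod idealprod.prod) auto

lemma add_subgroup_augpow: "subring A \<Longrightarrow> add_subgroup (augpow A k)"
  by (cases k) (simp_all add: add_subgroup_galg add_subgroup_idealprod)

lemma idealprod_gsmul:
  assumes "\<And>x. x \<in> P \<Longrightarrow> gsmul s x \<in> P" and "u \<in> idealprod P J"
  shows "gsmul s u \<in> idealprod P J"
proof -
  have "idealprod P J \<subseteq> gsmul s -` idealprod P J"
    using assms(1)
    by (intro idealprod_least add_subgroup_vimage add_subgroup_idealprod)
      (simp_all add: gsmul_diff gsmul_gmult idealprod.prod)
  then show ?thesis using assms(2) by blast
qed

lemma augpow_gsmul: "subring A \<Longrightarrow> s \<in> A \<Longrightarrow> x \<in> augpow A k \<Longrightarrow> gsmul s x \<in> augpow A k"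
proof (induction k arbitrary: x)
  case 0
  then show ?case by (simp add: galg_def gsmul_def subring_mult)
next
  case (Suc k)
  then show ?case by (simp add: idealprod_gsmul)
qed

lemma augpow_Suc_subset: "subring A \<Longrightarrow> augpow A (Suc k) \<subseteq> augpow A k"
proof (induction k)
  case 0
  show ?case
    by (auto simp: augI_def intro!: idealprod_least[OF add_subgroup_galg[OF 0]] gmult_galg[OF 0])
next
  case (Suc k)
  then show ?case by (simp add: idealprod_mono)
qed

lemma augpow_of_int_comp:
  assumes A: "subring A" and x: "x \<in> augpow UNIV k"
  shows "(of_int \<circ> x :: 'g::{finite,ab_group_add} \<Rightarrow> 'a::comm_ring_1) \<in> augpow A k"
  using x
proof (induction k arbitrary: x)
  case 0
  then show ?case by (simp add: galg_def subring_of_int[OF A])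
next
  case (Suc k)
  have "augpow UNIV (Suc k) \<subseteq> (\<lambda>x. of_int \<circ> x :: 'g \<Rightarrow> 'a) -` augpow A (Suc k)"
  proof (simp only: augpow.simps, intro idealprod_least add_subgroup_vimage add_subgroup_idealprod)
    fix x y :: "'g \<Rightarrow> int" assume x: "x \<in> augpow UNIV k" and y: "y \<in> augI UNIV"
    have "(of_int \<circ> x :: 'g \<Rightarrow> 'a) \<in> augpow A k" by (rule Suc.IH[OF x])
    moreover have "(of_int \<circ> y :: 'g \<Rightarrow> 'a) \<in> augI A"
      using y A by (simp add: augI_def galg_def aug_of_int_comp subring_of_int)
    ultimately show "gmult x y \<in> (\<lambda>x. of_int \<circ> x :: 'g \<Rightarrow> 'a) -` idealprod (augpow A k) (augI A)"
      by (simp add: of_int_comp_gmult idealprod.prod)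
  qed (auto simp: fun_eq_iff)
  then show ?case using Suc.prems unfolding augpow.simps by blast
qed

declare augpow.simps(2) [simp del]

section \<open>Clearing denominators in I(R,G)^k\<close>

lemma gmult_of_int_mult: "gmult (of_int a * x) (of_int b * y) = of_int (a * b) * gmult x y"
  by (simp add: gmult_def fun_eq_iff sum_distrib_left mult_ac)

lemma galg_clear_denominators:
  fixes R :: "rat set" and y :: "'g::finite \<Rightarrow> rat"
  assumes R: "subring R" and y: "y \<in> galg R"
  obtains e :: int and w where "e > 0" "1 / of_int e \<in> R" "of_int e * y = of_int \<circ> w"
proof -
  obtain e :: int where e: "e > 0" "1 / of_int e \<in> R" "\<forall>r\<in>range y. of_int e * r \<in> \<int>"
    using subring_rat_common_denominator[OF R, of "range y"] y by (auto simp: galg_def)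
  then have "\<forall>g. \<exists>a. of_int e * y g = of_int a" by (auto elim!: Ints_cases)
  then obtain w where "\<forall>g. of_int e * y g = of_int (w g)" by metis
  then have "of_int e * y = of_int \<circ> w" by (simp add: fun_eq_iff)
  with e that show ?thesis by blast
qed

definition augpow_fractions :: "rat set \<Rightarrow> nat \<Rightarrow> ('g::{finite,ab_group_add} \<Rightarrow> rat) set" where
  "augpow_fractions R k =
    {y. \<exists>e::int. e > 0 \<and> 1 / of_int e \<in> R \<and> (\<exists>w\<in>augpow UNIV k. of_int e * y = of_int \<circ> w)}"

lemma inverse_of_int_mult_mem:
  "subring R \<Longrightarrow> 1 / of_int a \<in> R \<Longrightarrow> 1 / of_int b \<in> R \<Longrightarrow> 1 / of_int (a * b) \<in> (R :: rat set)"
  using subring_mult[of R "1 / of_int a" "1 / of_int b"] by simp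

lemma add_subgroup_augpow_fractions:
  assumes R: "subring R"
  shows "add_subgroup (augpow_fractions R k :: ('g::{finite,ab_group_add} \<Rightarrow> rat) set)"
proof (rule add_subgroupI)
  show "0 \<in> augpow_fractions R k"
    unfolding augpow_fractions_def using R add_subgroup_zero[OF add_subgroup_augpow[OF subring_UNIV]]
    by (intro CollectI exI[of _ 1] conjI bexI[of _ 0]) (simp_all add: subring_def fun_eq_iff)
next
  fix u v :: "'g \<Rightarrow> rat" assume "u \<in> augpow_fractions R k" "v \<in> augpow_fractions R k"
  then obtain e1 e2 :: int and w1 w2 :: "'g \<Rightarrow> int" where
    "e1 > 0" "1 / of_int e1 \<in> R" "w1 \<in> augpow UNIV k" "of_int e1 * u = of_int \<circ> w1"
    "e2 > 0" "1 / of_int e2 \<in> R" "w2 \<in> augpow UNIV k" "of_int e2 * v = of_int \<circ> w2"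
    unfolding augpow_fractions_def by blast
  moreover have "of_int e2 * w1 + of_int e1 * w2 \<in> augpow UNIV k"
    using calculation add_subgroup_augpow[OF subring_UNIV]
    by (intro add_subgroup_add add_subgroup_of_int_mult) auto
  moreover have "of_int (e1 * e2) * (u + v) = of_int \<circ> (of_int e2 * w1 + of_int e1 * w2)"
    using calculation(4,8) by (simp add: fun_eq_iff algebra_simps)
  ultimately show "u + v \<in> augpow_fractions R k"
    unfolding augpow_fractions_def using inverse_of_int_mult_mem[OF R]
    by (intro CollectI exI[of _ "e1 * e2"] conjI bexI[of _ "of_int e2 * w1 + of_int e1 * w2"]) simp_all
next
  fix u :: "'g \<Rightarrow> rat" assume "u \<in> augpow_fractions R k"
  then obtain e :: int and w :: "'g \<Rightarrow> int" where
    "e > 0" "1 / of_int e \<in> R" "w \<in> augpow UNIV k" "of_int e * u = of_int \<circ> w"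
    unfolding augpow_fractions_def by blast
  moreover have "- w \<in> augpow UNIV k"
    using calculation(3) by (rule add_subgroup_neg[OF add_subgroup_augpow[OF subring_UNIV]])
  moreover have "of_int e * - u = of_int \<circ> (- w)"
    using calculation(4) by (simp add: fun_eq_iff)
  ultimately show "- u \<in> augpow_fractions R k" unfolding augpow_fractions_def by blast
qed

lemma gmult_augpow_fractions:
  assumes R: "subring R" and x: "x \<in> augpow_fractions R k" and y: "y \<in> augI R"
  shows "gmult x y \<in> augpow_fractions R (Suc k)"
proof -
  obtain e1 w1 where 1: "e1 > 0" "1 / of_int e1 \<in> R" "w1 \<in> augpow UNIV k"
    "of_int e1 * x = of_int \<circ> w1"
    using x unfolding augpow_fractions_def by blast
  obtain e2 w2 where 2: "e2 > 0" "1 / of_int e2 \<in> R" "of_int e2 * y = of_int \<circ> w2"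
    using galg_clear_denominators[OF R] y augI_def by blast
  have "of_int (aug w2) = aug (of_int e2 * y)" by (simp add: 2(3) aug_of_int_comp)
  also have "\<dots> = 0" using y by (simp add: aug_def augI_def sum_distrib_left[symmetric])
  finally have "w2 \<in> augI UNIV" by (simp add: augI_def galg_def)
  with 1(3) have "gmult w1 w2 \<in> augpow UNIV (Suc k)" by (simp add: augpow.simps(2) idealprod.prod)
  moreover have "of_int (e1 * e2) * gmult x y = gmult (of_int e1 * x) (of_int e2 * y)"
    by (rule gmult_of_int_mult[symmetric])
  then have "of_int (e1 * e2) * gmult x y = of_int \<circ> gmult w1 w2"
    by (simp only: 1(4) 2(3) of_int_comp_gmult)
  ultimately show ?thesis
    unfolding augpow_fractions_def using 1 2 inverse_of_int_mult_mem[OF R]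
    by (intro CollectI exI[of _ "e1 * e2"] conjI bexI[of _ "gmult w1 w2"]) simp_all
qed

lemma augpow_subset_augpow_fractions:
  assumes R: "subring R"
  shows "augpow R k \<subseteq> augpow_fractions R k"
proof (induction k)
  case 0
  show ?case
  proof
    fix y :: "'a \<Rightarrow> rat" assume "y \<in> augpow R 0"
    then obtain e :: int and w where "e > 0" "1 / of_int e \<in> R" "of_int e * y = of_int \<circ> w"
      using galg_clear_denominators[OF R] by auto
    then show "y \<in> augpow_fractions R 0" unfolding augpow_fractions_def by (auto simp: galg_def)
  qed
next
  case (Suc k)
  show ?case unfolding augpow.simps(2)
    using Suc.IH gmult_augpow_fractions[OF R]
    by (intro idealprod_least add_subgroup_augpow_fractions[OF R]) blast
qed

lemma augpow_clear_denominators: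
  fixes R :: "rat set" and y :: "'g::{finite,ab_group_add} \<Rightarrow> rat"
  assumes R: "subring R" and y: "y \<in> augpow R k"
  obtains e :: int and w where "e > 0" "1 / of_int e \<in> R" "w \<in> augpow UNIV k"
    "of_int e * y = of_int \<circ> w"
  using augpow_subset_augpow_fractions[OF R] y that unfolding augpow_fractions_def by blast

lemma Qcoset_iff: "z \<in> Qcoset A n x \<longleftrightarrow> z - x \<in> augpow A (Suc n)"
  by (auto simp: Qcoset_def gadd_eq_plus intro: exI[of _ "z - x"])

lemma Qcoset_self: "subring A \<Longrightarrow> x \<in> Qcoset A n x"
  by (simp add: Qcoset_iff add_subgroup_zero add_subgroup_augpow)

lemma Qcoset_eq_iff:
  assumes "subring A"
  shows "Qcoset A n x = Qcoset A n x' \<longleftrightarrow> x - x' \<in> augpow A (Suc n)"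
proof
  assume "Qcoset A n x = Qcoset A n x'"
  then show "x - x' \<in> augpow A (Suc n)" using Qcoset_self[OF assms] Qcoset_iff by metis
next
  assume d: "x - x' \<in> augpow A (Suc n)"
  have "z - x \<in> augpow A (Suc n) \<longleftrightarrow> z - x' \<in> augpow A (Suc n)" for z
    using add_subgroup_add[OF add_subgroup_augpow[OF assms] _ d, of "z - x"]
      add_subgroup_diff[OF add_subgroup_augpow[OF assms] _ d, of "z - x'"]
    by auto
  then show "Qcoset A n x = Qcoset A n x'" by (auto simp: Qcoset_iff)
qed

lemma Qadd_Qcoset:
  assumes "subring A"
  shows "Qadd (Qcoset A n x) (Qcoset A n x') = Qcoset A n (x + x')"
proof (intro set_eqI iffI)
  fix z assume "z \<in> Qadd (Qcoset A n x) (Qcoset A n x')"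
  then obtain u v where "z = u + v" "u - x \<in> augpow A (Suc n)" "v - x' \<in> augpow A (Suc n)"
    by (auto simp: Qadd_def gadd_eq_plus Qcoset_iff)
  then show "z \<in> Qcoset A n (x + x')"
    using add_subgroup_add[OF add_subgroup_augpow[OF assms]] by (fastforce simp: Qcoset_iff algebra_simps)
next
  fix z assume "z \<in> Qcoset A n (x + x')"
  then have "z - x' \<in> Qcoset A n x" by (simp add: Qcoset_iff algebra_simps)
  moreover have "z = gadd (z - x') x'" by (simp add: gadd_eq_plus)
  ultimately show "z \<in> Qadd (Qcoset A n x) (Qcoset A n x')"
    unfolding Qadd_def using Qcoset_self[OF assms] by blast
qed

lemma Qsmul_Qcoset:
  assumes A: "subring A" and s: "s \<in> A"
  shows "Qsmul A n s (Qcoset A n x) = Qcoset A n (gsmul s x)"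
proof (intro set_eqI iffI)
  fix z assume "z \<in> Qsmul A n s (Qcoset A n x)"
  then obtain u y where z: "z = gsmul s u + y" "u - x \<in> augpow A (Suc n)" "y \<in> augpow A (Suc n)"
    by (auto simp: Qsmul_def gadd_eq_plus Qcoset_iff)
  have "z - gsmul s x = gsmul s (u - x) + y" using z(1) by (simp add: gsmul_diff)
  also have "\<dots> \<in> augpow A (Suc n)"
    using z(2,3) by (intro add_subgroup_add[OF add_subgroup_augpow[OF A]] augpow_gsmul[OF A s])
  finally show "z \<in> Qcoset A n (gsmul s x)" by (simp add: Qcoset_iff)
next
  fix z assume "z \<in> Qcoset A n (gsmul s x)"
  then have "z - gsmul s x \<in> augpow A (Suc n)" by (simp add: Qcoset_iff)
  moreover have "z = gadd (gsmul s x) (z - gsmul s x)" by (simp add: gadd_eq_plus)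
  ultimately show "z \<in> Qsmul A n s (Qcoset A n x)"
    unfolding Qsmul_def using Qcoset_self[OF A] by blast
qed

lemma Qadd_Qn: "subring A \<Longrightarrow> m \<in> Qn A n \<Longrightarrow> m' \<in> Qn A n \<Longrightarrow> Qadd m m' \<in> Qn A n"
  by (auto simp: Qn_def Qadd_Qcoset add_subgroup_add add_subgroup_augpow)

definition coset_rep :: "'x set \<Rightarrow> 'x" where
  "coset_rep m = (SOME z. z \<in> m)"

lemma coset_rep_Qn:
  assumes A: "subring A" and m: "m \<in> Qn A n"
  shows "coset_rep m \<in> augpow A n" "Qcoset A n (coset_rep m) = m"
proof -
  obtain x where x: "x \<in> augpow A n" "m = Qcoset A n x" using m by (auto simp: Qn_def)
  have "coset_rep m \<in> m" unfolding coset_rep_def using Qcoset_self[OF A] x(2) by (metis someI)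
  then have d: "coset_rep m - x \<in> augpow A (Suc n)" using x(2) by (simp add: Qcoset_iff)
  then show "Qcoset A n (coset_rep m) = m" using x(2) Qcoset_eq_iff[OF A] by blast
  have "coset_rep m - x + x \<in> augpow A n"
    using d augpow_Suc_subset[OF A] x(1) by (blast intro: add_subgroup_add[OF add_subgroup_augpow[OF A]])
  then show "coset_rep m \<in> augpow A n" by simp
qed

lemma sum_fun_apply: "(\<Sum>i\<in>I. f i) x = (\<Sum>i\<in>I. f i x)"
  by (induction I rule: infinite_finite_induct) auto

lemma supp_add: "supp (c + d) \<subseteq> supp c \<union> supp d"
  by (auto simp: supp_def)

lemma supp_uminus [simp]: "supp (- c) = supp c"
  by (simp add: supp_def)

lemma supp_delta [simp]: "supp (delta p) = {p}"
  by (simp add: supp_def delta_def)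

lemma finite_supp_add: "finite (supp c) \<Longrightarrow> finite (supp d) \<Longrightarrow> finite (supp (c + d))"
  by (meson finite_UnI finite_subset supp_add)

lemma finite_supp_diff: "finite (supp c) \<Longrightarrow> finite (supp d) \<Longrightarrow> finite (supp (c - d))"
  using finite_supp_add[of c "- d"] by simp

lemma finite_supp_sum:
  "(\<And>i. i \<in> I \<Longrightarrow> finite (supp (c i))) \<Longrightarrow> finite (supp (\<Sum>i\<in>I. c i))"
proof (induction I rule: infinite_finite_induct)
  case (insert i I)
  then show ?case unfolding sum.insert[OF insert.hyps] by (intro finite_supp_add) auto
qed (simp_all add: supp_def)

lemma add_subgroup_finite_supp: "add_subgroup {c. finite (supp c)}"
  by (rule add_subgroupI) (simp_all add: finite_supp_add, simp add: supp_def)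

definition lincomb :: "('p \<Rightarrow> 'b::ring_1) \<Rightarrow> ('p \<Rightarrow> int) \<Rightarrow> 'b" where
  "lincomb f c = (\<Sum>p\<in>supp c. of_int (c p) * f p)"

lemma lincomb_superset:
  "finite S \<Longrightarrow> supp c \<subseteq> S \<Longrightarrow> lincomb f c = (\<Sum>p\<in>S. of_int (c p) * f p)"
  unfolding lincomb_def by (rule sum.mono_neutral_left) (auto simp: supp_def)

lemma lincomb_add:
  assumes "finite (supp c)" "finite (supp d)"
  shows "lincomb f (c + d) = lincomb f c + lincomb f d"
proof -
  let ?S = "supp c \<union> supp d"
  have "finite ?S" using assms by simp
  then show ?thesis
    using supp_add[of c d]
    by (simp add: lincomb_superset[of ?S] sum.distrib[symmetric] distrib_right)
qed

lemma lincomb_uminus: "lincomb f (- c) = - lincomb f c"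
  by (simp add: lincomb_def sum_negf[symmetric])

lemma lincomb_diff:
  "finite (supp c) \<Longrightarrow> finite (supp d) \<Longrightarrow> lincomb f (c - d) = lincomb f c - lincomb f d"
  using lincomb_add[of c "- d" f] by (simp add: lincomb_uminus)

lemma lincomb_delta: "lincomb f (delta p) = f p"
  unfolding lincomb_def supp_delta by (simp add: delta_def)

lemma lincomb_of_int_mult:
  "finite (supp c) \<Longrightarrow> lincomb f (of_int j * c) = of_int j * lincomb f c"
  by (subst lincomb_superset[of "supp c"]) (auto simp: supp_def lincomb_def sum_distrib_left mult_ac)

lemma lincomb_sum:
  "(\<And>i. i \<in> I \<Longrightarrow> finite (supp (c i))) \<Longrightarrow> lincomb f (\<Sum>i\<in>I. c i) = (\<Sum>i\<in>I. lincomb f (c i))"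
proof (induction I rule: infinite_finite_induct)
  case (insert i I)
  then show ?case
    unfolding sum.insert[OF insert.hyps] by (subst lincomb_add) (auto intro: finite_supp_sum)
qed (simp_all add: lincomb_def supp_def)

lemma lincomb_lincomb:
  assumes "finite (supp c)" "\<And>p. finite (supp (h p))"
  shows "lincomb f (lincomb h c) = lincomb (\<lambda>p. lincomb f (h p)) c"
proof -
  have "finite (supp (of_int (c p) * h p))" for p
    using assms(2) by (rule finite_subset[rotated]) (auto simp: supp_def)
  then show ?thesis
    using assms by (simp add: lincomb_def[of h] lincomb_sum lincomb_of_int_mult lincomb_def[of _ c])
qed

lemma lincomb_delta_self: "finite (supp c) \<Longrightarrow> lincomb delta c = c"
  by (auto simp: lincomb_def fun_eq_iff sum_fun_apply delta_def supp_def if_distrib cong: if_cong)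

lemma lincomb_mem:
  "add_subgroup H \<Longrightarrow> (\<And>p. p \<in> supp c \<Longrightarrow> f p \<in> H) \<Longrightarrow> lincomb f c \<in> H"
  unfolding lincomb_def by (intro add_subgroup_sum add_subgroup_of_int_mult)

lemma lincomb_gsmul: "lincomb (\<lambda>p. gsmul s (f p)) c = gsmul s (lincomb f c)"
  by (simp add: lincomb_def gsmul_def fun_eq_iff sum_fun_apply sum_distrib_left mult_ac)

lemma supp_lincomb_delta: "supp (lincomb (\<lambda>p. delta (g p)) c) \<subseteq> g ` supp c"
proof
  fix q assume q: "q \<in> supp (lincomb (\<lambda>p. delta (g p)) c)"
  show "q \<in> g ` supp c"
  proof (rule ccontr)
    assume "q \<notin> g ` supp c"
    then have "lincomb (\<lambda>p. delta (g p)) c q = 0"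
      by (auto simp: lincomb_def sum_fun_apply delta_def intro!: sum.neutral)
    with q show False by (simp add: supp_def)
  qed
qed

lemma tsm_eq_lincomb: "tsm s c = lincomb (\<lambda>p. delta (s * fst p, snd p)) c"
  by (simp add: tsm_def lincomb_def fun_eq_iff sum_fun_apply)

section \<open>The tensor product construction\<close>

lemma fadd_eq_plus: "fadd c d = c + d"
  by (simp add: fadd_def fun_eq_iff)

lemma fdiff_eq_minus: "fdiff c d = c - d"
  by (simp add: fdiff_def fun_eq_iff)

lemma add_subgroup_trel: "add_subgroup (trel A M addM)"
proof (rule add_subgroupI)
  show "0 \<in> trel A M addM" using trel.zero by (simp add: zero_fun_def)
next
  fix u v assume "u \<in> trel A M addM" "v \<in> trel A M addM"
  then show "u + v \<in> trel A M addM" using trel.add by (simp add: fadd_eq_plus)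
next
  fix u assume "u \<in> trel A M addM"
  then show "- u \<in> trel A M addM" using trel.neg by (simp add: fun_Compl_def)
qed

lemma trel_least [case_names subgroup lin1 lin2]:
  assumes H: "add_subgroup H"
    and lin1: "\<And>r r' m. r \<in> A \<Longrightarrow> r' \<in> A \<Longrightarrow> m \<in> M \<Longrightarrow>
      delta (r + r', m) - (delta (r, m) + delta (r', m)) \<in> H"
    and lin2: "\<And>r m m'. r \<in> A \<Longrightarrow> m \<in> M \<Longrightarrow> m' \<in> M \<Longrightarrow>
      delta (r, addM m m') - (delta (r, m) + delta (r, m')) \<in> H"
  shows "trel A M addM \<subseteq> H"
proof
  fix u assume "u \<in> trel A M addM"
  then show "u \<in> H"
  proof induction
    case zero
    show ?case using add_subgroup_zero[OF H] by (simp add: zero_fun_def)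
  next
    case (add u v)
    show ?case unfolding fadd_eq_plus using add.IH by (rule add_subgroup_add[OF H])
  next
    case (neg u)
    then show ?case using add_subgroup_neg[OF H] by (simp add: fun_Compl_def)
  next
    case (lin1 r r' m)
    then show ?case unfolding fdiff_eq_minus fadd_eq_plus by (rule assms(2))
  next
    case (lin2 r m m')
    then show ?case unfolding fdiff_eq_minus fadd_eq_plus by (rule assms(3))
  qed
qed

lemma add_subgroup_tfree: "add_subgroup (tfree A M)"
proof (rule add_subgroupI)
  show "0 \<in> tfree A M" by (simp add: tfree_def supp_def)
next
  fix c d assume "c \<in> tfree A M" "d \<in> tfree A M"
  then show "c + d \<in> tfree A M"
    using supp_add[of c d] by (auto simp: tfree_def intro: finite_supp_add)
next
  fix c assume "c \<in> tfree A M"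
  then show "- c \<in> tfree A M" by (simp add: tfree_def)
qed

lemma delta_tfree: "p \<in> A \<times> M \<Longrightarrow> delta p \<in> tfree A M"
  by (simp add: tfree_def)

lemma finite_supp_tfree: "c \<in> tfree A M \<Longrightarrow> finite (supp c)"
  by (simp add: tfree_def)

lemma tcls_iff: "d \<in> tcls A M addM c \<longleftrightarrow> d - c \<in> trel A M addM"
  by (auto simp: tcls_def fadd_eq_plus intro: exI[of _ "d - c"])

lemma tcls_eq_iff: "tcls A M addM c = tcls A M addM c' \<longleftrightarrow> c - c' \<in> trel A M addM"
proof
  assume "tcls A M addM c = tcls A M addM c'"
  then show "c - c' \<in> trel A M addM"
    using tcls_iff[of c] add_subgroup_zero[OF add_subgroup_trel] by (metis diff_self)
next
  assume d: "c - c' \<in> trel A M addM"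
  have "z - c \<in> trel A M addM \<longleftrightarrow> z - c' \<in> trel A M addM" for z
    using add_subgroup_add[OF add_subgroup_trel _ d, of "z - c"]
      add_subgroup_diff[OF add_subgroup_trel _ d, of "z - c'"]
    by auto
  then show "tcls A M addM c = tcls A M addM c'" by (auto simp: tcls_iff)
qed

lemma tadd_tcls: "tadd (tcls A M addM c) (tcls A M addM c') = tcls A M addM (c + c')"
proof (intro set_eqI iffI)
  fix z assume "z \<in> tadd (tcls A M addM c) (tcls A M addM c')"
  then obtain a b where z: "z = a + b" "a - c \<in> trel A M addM" "b - c' \<in> trel A M addM"
    by (auto simp: tadd_def fadd_eq_plus tcls_iff)
  have "z - (c + c') = (a - c) + (b - c')" using z(1) by (simp add: algebra_simps)
  also have "\<dots> \<in> trel A M addM" using z(2,3) by (rule add_subgroup_add[OF add_subgroup_trel])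
  finally show "z \<in> tcls A M addM (c + c')" by (simp add: tcls_iff)
next
  fix z assume "z \<in> tcls A M addM (c + c')"
  then have "z - c' \<in> tcls A M addM c" by (simp add: tcls_iff algebra_simps)
  moreover have "z = fadd (z - c') c'" by (simp add: fadd_eq_plus)
  moreover have "c' \<in> tcls A M addM c'"
    using add_subgroup_zero[OF add_subgroup_trel] by (simp add: tcls_iff)
  ultimately show "z \<in> tadd (tcls A M addM c) (tcls A M addM c')"
    unfolding tadd_def by blast
qed

type_synonym 'g formal_sum = "rat \<times> ('g \<Rightarrow> int) set \<Rightarrow> int"

definition eval_at :: "'g formal_sum \<Rightarrow> (rat \<times> ('g \<Rightarrow> int) set \<Rightarrow> 'g \<Rightarrow> int) \<Rightarrow> 'g \<Rightarrow> rat" where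
  "eval_at c \<rho> = (\<lambda>g. \<Sum>p\<in>supp c. of_int (c p) * fst p * of_int (\<rho> p g))"

lemma fval_eq_eval_at:
  "fval R n c = {eval_at c \<rho> + y | \<rho> y. (\<forall>p\<in>supp c. \<rho> p \<in> snd p) \<and> y \<in> augpow R (Suc n)}"
  by (simp add: fval_def eval_at_def gadd_eq_plus)

lemma eval_at_diff:
  "eval_at c \<rho> - eval_at c \<rho>' = lincomb (\<lambda>p. gsmul (fst p) (of_int \<circ> (\<rho> p - \<rho>' p))) c"
  by (simp add: eval_at_def lincomb_def fun_eq_iff sum_fun_apply gsmul_def sum_subtractf[symmetric]
      algebra_simps)

text \<open>While fval c collects eval_at c \<rho> over all choices \<rho> of representatives of the cosets
  in the support of c, free_eval fixes one choice.\<close>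

definition free_eval :: "'g formal_sum \<Rightarrow> 'g \<Rightarrow> rat" where
  "free_eval c = eval_at c (\<lambda>p. coset_rep (snd p))"

lemma free_eval_lincomb: "free_eval c = lincomb (\<lambda>(r, m). gsmul r (of_int \<circ> coset_rep m)) c"
  by (simp add: free_eval_def eval_at_def lincomb_def fun_eq_iff sum_fun_apply gsmul_def
      case_prod_beta algebra_simps)

lemma free_eval_delta: "free_eval (delta (r, m)) = gsmul r (of_int \<circ> coset_rep m)"
  by (simp add: free_eval_lincomb lincomb_delta)

lemma free_eval_add:
  "finite (supp c) \<Longrightarrow> finite (supp d) \<Longrightarrow> free_eval (c + d) = free_eval c + free_eval d"
  by (simp add: free_eval_lincomb lincomb_add)

lemma free_eval_diff:
  "finite (supp c) \<Longrightarrow> finite (supp d) \<Longrightarrow> free_eval (c - d) = free_eval c - free_eval d"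
  by (simp add: free_eval_lincomb lincomb_diff)

lemma free_eval_tsm:
  assumes c: "finite (supp c)"
  shows "free_eval (tsm s c) = gsmul s (free_eval c)"
proof -
  let ?W = "\<lambda>(r, m). gsmul r (of_int \<circ> coset_rep m) :: 'a \<Rightarrow> rat"
  have "free_eval (tsm s c) = lincomb (\<lambda>p. free_eval (delta (s * fst p, snd p))) c"
    unfolding tsm_eq_lincomb free_eval_lincomb by (rule lincomb_lincomb[OF c]) simp
  also have "(\<lambda>p. free_eval (delta (s * fst p, snd p))) = (\<lambda>p. gsmul s (?W p))"
    by (simp add: fun_eq_iff free_eval_delta gsmul_def case_prod_beta)
  also have "lincomb (\<lambda>p. gsmul s (?W p)) c = gsmul s (free_eval c)"
    unfolding free_eval_lincomb by (rule lincomb_gsmul)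
  finally show ?thesis .
qed

section \<open>The isomorphism f\<close>

locale rat_tensor_Qn =
  fixes R :: "rat set" and n :: nat
  assumes subring: "subring R"
begin

abbreviation QZ :: "('g::{finite,ab_group_add} \<Rightarrow> int) set set" where
  "QZ \<equiv> Qn UNIV n"

abbreviation Qc :: "('g::{finite,ab_group_add} \<Rightarrow> int) \<Rightarrow> ('g \<Rightarrow> int) set" where
  "Qc x \<equiv> Qcoset UNIV n x"

abbreviation TR :: "'g::{finite,ab_group_add} formal_sum set" where
  "TR \<equiv> trel R QZ Qadd"

abbreviation cls :: "'g::{finite,ab_group_add} formal_sum \<Rightarrow> 'g formal_sum set" where
  "cls c \<equiv> tcls R QZ Qadd c"

lemma Qc_QZ: "x \<in> augpow UNIV n \<Longrightarrow> Qc x \<in> QZ"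
  by (auto simp: Qn_def)

lemma coset_rep_Qc_diff: "x \<in> augpow UNIV n \<Longrightarrow> coset_rep (Qc x) - x \<in> augpow UNIV (Suc n)"
  using coset_rep_Qn(2)[OF subring_UNIV Qc_QZ] by (simp add: Qcoset_eq_iff[OF subring_UNIV])

lemma trel_Qc_add:
  assumes "r \<in> R" "x \<in> augpow UNIV n" "x' \<in> augpow UNIV n"
  shows "delta (r, Qc (x + x')) - (delta (r, Qc x) + delta (r, Qc x')) \<in> TR"
  using trel.lin2[where addM = Qadd, OF assms(1) Qc_QZ[OF assms(2)] Qc_QZ[OF assms(3)]]
  by (simp add: Qadd_Qcoset[OF subring_UNIV] fdiff_eq_minus fadd_eq_plus)

lemma trel_tfree: "TR \<subseteq> tfree R (QZ :: ('g::{finite,ab_group_add} \<Rightarrow> int) set set)"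
proof (induction rule: trel_least)
  case subgroup
  show ?case by (rule add_subgroup_tfree)
next
  case (lin1 r r' m)
  then show ?case
    using add_subgroup_add[OF subring_add_subgroup[OF subring]]
    by (intro add_subgroup_diff[OF add_subgroup_tfree] add_subgroup_add[OF add_subgroup_tfree]
        delta_tfree) auto
next
  case (lin2 r m m')
  then show ?case
    using Qadd_Qn[OF subring_UNIV]
    by (intro add_subgroup_diff[OF add_subgroup_tfree] add_subgroup_add[OF add_subgroup_tfree]
        delta_tfree) auto
qed

lemma free_eval_trel:
  fixes u :: "'g::{finite,ab_group_add} formal_sum"
  assumes "u \<in> TR"
  shows "free_eval u \<in> augpow R (Suc n)"
proof -
  let ?H = "{u. finite (supp u)} \<inter> free_eval -` augpow R (Suc n)"
  have "TR \<subseteq> ?H"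
  proof (induction rule: trel_least)
    case subgroup
    show ?case
      by (intro add_subgroup_Int_vimage add_subgroup_finite_supp add_subgroup_augpow subring)
        (simp add: free_eval_diff)
  next
    case (lin1 r r' m)
    have "free_eval (delta (r + r', m) - (delta (r, m) + delta (r', m))) = 0"
      by (simp add: free_eval_diff free_eval_add free_eval_delta finite_supp_add gsmul_def
          fun_eq_iff algebra_simps)
    then show ?case
      by (simp add: finite_supp_diff finite_supp_add add_subgroup_zero add_subgroup_augpow subring)
  next
    case (lin2 r m m')
    then have r: "r \<in> R" and m: "m \<in> QZ" "m' \<in> QZ" by simp_all
    define z z' where "z = coset_rep m" and "z' = coset_rep m'"
    have z: "z \<in> augpow UNIV n" "z' \<in> augpow UNIV n" "m = Qc z" "m' = Qc z'"
      using coset_rep_Qn[OF subring_UNIV m(1)] coset_rep_Qn[OF subring_UNIV m(2)]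
      by (simp_all add: z_def z'_def)
    have "Qadd m m' = Qc (z + z')" unfolding z(3,4) by (rule Qadd_Qcoset[OF subring_UNIV])
    have "free_eval (delta (r, Qadd m m') - (delta (r, m) + delta (r, m')))
        = gsmul r (of_int \<circ> (coset_rep (Qc (z + z')) - (z + z')))"
      by (simp add: free_eval_diff free_eval_add free_eval_delta finite_supp_add z_def z'_def
          \<open>Qadd m m' = Qc (z + z')\<close> gsmul_def fun_eq_iff algebra_simps)
    also have "\<dots> \<in> augpow R (Suc n)"
      using z coset_rep_Qc_diff add_subgroup_add[OF add_subgroup_augpow[OF subring_UNIV]]
      by (intro augpow_gsmul[OF subring r] augpow_of_int_comp[OF subring]) blast
    finally show ?case
      by (simp add: finite_supp_diff finite_supp_add)
  qed
  then show ?thesis using assms by blast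
qed

lemma free_eval_tfree:
  fixes c :: "'g::{finite,ab_group_add} formal_sum"
  assumes "c \<in> tfree R QZ"
  shows "free_eval c \<in> augpow R n"
  unfolding free_eval_lincomb
proof (rule lincomb_mem[OF add_subgroup_augpow[OF subring]])
  fix p assume "p \<in> supp c"
  then have "fst p \<in> R" "snd p \<in> QZ" using assms by (auto simp: tfree_def)
  then show "(case p of (r, m) \<Rightarrow> gsmul r (of_int \<circ> coset_rep m)) \<in> augpow R n"
    using coset_rep_Qn[OF subring_UNIV]
    by (cases p) (auto intro!: augpow_gsmul[OF subring] augpow_of_int_comp[OF subring])
qed

lemma eval_at_in_Qcoset_free_eval:
  fixes c :: "'g::{finite,ab_group_add} formal_sum"
  assumes c: "c \<in> tfree R QZ" and \<rho>: "\<forall>p\<in>supp c. \<rho> p \<in> snd p"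
  shows "eval_at c \<rho> - free_eval c \<in> augpow R (Suc n)"
  unfolding free_eval_def eval_at_diff
proof (rule lincomb_mem[OF add_subgroup_augpow[OF subring]])
  fix p assume p: "p \<in> supp c"
  then have "fst p \<in> R" and m: "snd p \<in> QZ" using c by (auto simp: tfree_def)
  have "\<rho> p \<in> Qc (coset_rep (snd p))" using \<rho> p coset_rep_Qn(2)[OF subring_UNIV m] by simp
  then have "\<rho> p - coset_rep (snd p) \<in> augpow UNIV (Suc n)" by (simp add: Qcoset_iff)
  then show "gsmul (fst p) (of_int \<circ> (\<rho> p - coset_rep (snd p))) \<in> augpow R (Suc n)"
    by (intro augpow_gsmul[OF subring \<open>fst p \<in> R\<close>] augpow_of_int_comp[OF subring])
qed

lemma fval_eq_Qcoset_free_eval: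
  fixes c :: "'g::{finite,ab_group_add} formal_sum"
  assumes c: "c \<in> tfree R QZ"
  shows "fval R n c = Qcoset R n (free_eval c)"
proof (intro set_eqI iffI)
  fix z assume "z \<in> fval R n c"
  then obtain \<rho> y where z: "z = eval_at c \<rho> + y" "\<forall>p\<in>supp c. \<rho> p \<in> snd p" "y \<in> augpow R (Suc n)"
    unfolding fval_eq_eval_at by blast
  have "z - free_eval c = (eval_at c \<rho> - free_eval c) + y" using z(1) by (simp add: algebra_simps)
  also have "\<dots> \<in> augpow R (Suc n)"
    using eval_at_in_Qcoset_free_eval[OF c z(2)] z(3)
    by (rule add_subgroup_add[OF add_subgroup_augpow[OF subring]])
  finally show "z \<in> Qcoset R n (free_eval c)" by (simp add: Qcoset_iff)
next
  fix z assume "z \<in> Qcoset R n (free_eval c)"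
  then have "z - free_eval c \<in> augpow R (Suc n)" by (simp add: Qcoset_iff)
  moreover have "\<forall>p\<in>supp c. coset_rep (snd p) \<in> snd p"
    using c coset_rep_Qn(2)[OF subring_UNIV] Qcoset_self[OF subring_UNIV] by (fastforce simp: tfree_def)
  moreover have "z = eval_at c (\<lambda>p. coset_rep (snd p)) + (z - free_eval c)"
    by (simp add: free_eval_def)
  ultimately show "z \<in> fval R n c" unfolding fval_eq_eval_at by blast
qed

lemma fval_tcls:
  fixes c :: "'g::{finite,ab_group_add} formal_sum"
  assumes c: "c \<in> tfree R QZ" and d: "d \<in> cls c"
  shows "fval R n d = Qcoset R n (free_eval c)"
proof -
  have dc: "d - c \<in> TR" using d by (simp add: tcls_iff)
  then have "d - c \<in> tfree R QZ" using trel_tfree by blast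
  then have "d \<in> tfree R QZ"
    using add_subgroup_add[OF add_subgroup_tfree c] by fastforce
  then have "fval R n d = Qcoset R n (free_eval d)" by (rule fval_eq_Qcoset_free_eval)
  also have "\<dots> = Qcoset R n (free_eval c)"
    using free_eval_trel[OF dc] finite_supp_tfree[OF \<open>d \<in> tfree R QZ\<close>] finite_supp_tfree[OF c]
    by (simp add: Qcoset_eq_iff[OF subring] free_eval_diff)
  finally show ?thesis .
qed

lemma Fmap_tcls:
  fixes c :: "'g::{finite,ab_group_add} formal_sum"
  assumes "c \<in> tfree R QZ"
  shows "Fmap R n (cls c) = Qcoset R n (free_eval c)"
proof -
  have "c \<in> cls c" using add_subgroup_zero[OF add_subgroup_trel] by (simp add: tcls_iff)
  then show ?thesis
    unfolding Fmap_def using fval_tcls[OF assms] by auto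
qed

lemma tsm_trel:
  fixes u :: "'g::{finite,ab_group_add} formal_sum"
  assumes s: "s \<in> R" and u: "u \<in> TR"
  shows "tsm s u \<in> TR"
proof -
  have tsm_diff: "tsm s (c - d) = tsm s c - tsm s d"
    if "finite (supp c)" "finite (supp d)" for c d :: "'g formal_sum"
    using that by (simp add: tsm_eq_lincomb lincomb_diff)
  have tsm_lin: "tsm s (delta a - (delta b + delta b')) =
      delta (s * fst a, snd a) - (delta (s * fst b, snd b) + delta (s * fst b', snd b'))"
    for a b b' :: "rat \<times> ('g \<Rightarrow> int) set"
    by (simp add: tsm_eq_lincomb lincomb_diff lincomb_add lincomb_delta finite_supp_add)
  have sR: "s * r \<in> R" if "r \<in> R" for r using subring_mult[OF subring s that] .
  let ?H = "{u. finite (supp u)} \<inter> tsm s -` (TR :: 'g formal_sum set)"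
  have "TR \<subseteq> ?H"
  proof (induction rule: trel_least)
    case subgroup
    show ?case
      by (intro add_subgroup_Int_vimage add_subgroup_finite_supp add_subgroup_trel)
        (simp add: tsm_diff)
  next
    case (lin1 r r' m)
    then show ?case
      using trel.lin1[where addM = Qadd, OF sR[OF lin1(1)] sR[OF lin1(2)] lin1(3)]
      by (simp add: tsm_lin finite_supp_diff finite_supp_add fdiff_eq_minus fadd_eq_plus
          distrib_left)
  next
    case (lin2 r m m')
    then show ?case
      using trel.lin2[where addM = Qadd, OF sR[OF lin2(1)] lin2(2,3)]
      by (simp add: tsm_lin finite_supp_diff finite_supp_add fdiff_eq_minus fadd_eq_plus)
  qed
  then show ?thesis using u by blast
qed

lemma tsmul_tcls:
  fixes c :: "'g::{finite,ab_group_add} formal_sum"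
  assumes s: "s \<in> R" and c: "c \<in> tfree R QZ"
  shows "tsmul R QZ Qadd s (cls c) = cls (tsm s c)"
proof (intro set_eqI iffI)
  fix z assume "z \<in> tsmul R QZ Qadd s (cls c)"
  then obtain c' d where z: "z = tsm s c' + d" "c' - c \<in> TR" "d \<in> TR"
    unfolding tsmul_def by (auto simp: tcls_iff fadd_eq_plus)
  have "finite (supp (c' - c))" using z(2) trel_tfree finite_supp_tfree by blast
  then have "finite (supp c')"
    using finite_supp_add[OF _ finite_supp_tfree[OF c], of "c' - c"] by simp
  then have "z - tsm s c = tsm s (c' - c) + d"
    using z(1) finite_supp_tfree[OF c] by (simp add: tsm_eq_lincomb lincomb_diff)
  also have "\<dots> \<in> TR"
    by (intro add_subgroup_add[OF add_subgroup_trel] tsm_trel[OF s] z(2,3))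
  finally show "z \<in> cls (tsm s c)" by (simp add: tcls_iff)
next
  fix z assume "z \<in> cls (tsm s c)"
  then have "z - tsm s c \<in> TR" by (simp add: tcls_iff)
  moreover have "c \<in> cls c" using add_subgroup_zero[OF add_subgroup_trel] by (simp add: tcls_iff)
  moreover have "z = fadd (tsm s c) (z - tsm s c)" by (simp add: fadd_eq_plus)
  ultimately show "z \<in> tsmul R QZ Qadd s (cls c)" unfolding tsmul_def by blast
qed

lemma delta_of_int_mult_left:
  fixes m :: "('g::{finite,ab_group_add} \<Rightarrow> int) set"
  assumes "r \<in> R" "m \<in> QZ"
  shows "delta (of_int j * r, m) - of_int j * delta (r, m) \<in> TR"
  using assms trel.lin1[where addM = Qadd]
  by (intro additive_mod_of_int_mult[OF add_subgroup_trel subring_add_subgroup[OF subring]])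
    (simp_all add: fdiff_eq_minus fadd_eq_plus)

lemma delta_of_int_mult_right:
  assumes "r \<in> R" "x \<in> augpow UNIV n"
  shows "delta (r, Qc (of_int j * x)) - of_int j * delta (r, Qc x) \<in> TR"
  by (rule additive_mod_of_int_mult[where f = "\<lambda>x. delta (r, Qc x)", OF add_subgroup_trel
        add_subgroup_augpow[OF subring_UNIV] trel_Qc_add[OF assms(1)] assms(2)])

lemma delta_sum_right:
  assumes "r \<in> R" "\<And>i. i \<in> I \<Longrightarrow> x i \<in> augpow UNIV n"
  shows "delta (r, Qc (\<Sum>i\<in>I. of_int (k i) * x i)) - (\<Sum>i\<in>I. of_int (k i) * delta (r, Qc (x i))) \<in> TR"
  by (rule additive_mod_sum[where f = "\<lambda>x. delta (r, Qc x)", OF add_subgroup_trel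
        add_subgroup_augpow[OF subring_UNIV] trel_Qc_add[OF assms(1)] assms(2)])

lemma delta_Qc_zero: "r \<in> R \<Longrightarrow> delta (r, Qc (0 :: 'g::{finite,ab_group_add} \<Rightarrow> int)) \<in> TR"
  using delta_of_int_mult_right[OF _ add_subgroup_zero[OF add_subgroup_augpow[OF subring_UNIV]], of r 0]
  by simp

lemma delta_common_denominator:
  fixes m :: "('g::{finite,ab_group_add} \<Rightarrow> int) set"
  assumes D: "D > 0" "1 / of_int D \<in> R" and m: "m \<in> QZ" and r: "of_int D * r = of_int a"
  shows "delta (r, m) - of_int a * delta (1 / of_int D, Qc (coset_rep m)) \<in> TR"
proof -
  have "r = of_int a * (1 / of_int D)" using r D(1) by (simp add: field_simps)
  moreover have "Qc (coset_rep m) = m" by (rule coset_rep_Qn(2)[OF subring_UNIV m])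
  ultimately show ?thesis using delta_of_int_mult_left[OF D(2) m, of a] by simp
qed

lemma tfree_equiv_pure_tensor:
  fixes c :: "'g::{finite,ab_group_add} formal_sum"
  assumes c: "c \<in> tfree R QZ"
  obtains D :: int and x where "D > 0" "1 / of_int D \<in> R" "x \<in> augpow UNIV n"
    "c - delta (1 / of_int D, Qc x) \<in> TR"
proof -
  have c_fin: "finite (supp c)" and c_supp: "supp c \<subseteq> R \<times> QZ" using c by (auto simp: tfree_def)
  then have "finite (fst ` supp c)" "fst ` supp c \<subseteq> R" by auto
  then obtain D :: int where D: "D > 0" "1 / of_int D \<in> R" "\<forall>r \<in> fst ` supp c. of_int D * r \<in> \<int>"
    by (rule subring_rat_common_denominator[OF subring])
  have "\<forall>p\<in>supp c. \<exists>k. of_int D * fst p = of_int k" using D(3) by (auto simp: Ints_def)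
  then obtain a where a: "\<And>p. p \<in> supp c \<Longrightarrow> of_int D * fst p = of_int (a p)"
    by (auto dest!: bchoice)
  define u where "u = 1 / (of_int D :: rat)"
  define y :: "rat \<times> ('g \<Rightarrow> int) set \<Rightarrow> 'g \<Rightarrow> int" where "y p = coset_rep (snd p)" for p
  define x where "x = (\<Sum>p\<in>supp c. of_int (c p * a p) * y p)"
  let ?S = "\<Sum>p\<in>supp c. of_int (c p * a p) * delta (u, Qc (y p))"
  have y: "y p \<in> augpow UNIV n" if "p \<in> supp c" for p
  proof -
    have "snd p \<in> QZ" using c_supp that by auto
    then show ?thesis unfolding y_def by (rule coset_rep_Qn(1)[OF subring_UNIV])
  qed
  have pure: "delta p - of_int (a p) * delta (u, Qc (y p)) \<in> TR" if "p \<in> supp c" for p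
  proof -
    have "snd p \<in> QZ" using c_supp that by auto
    from delta_common_denominator[OF D(1,2) this a[OF that]] show ?thesis
      by (simp add: u_def y_def)
  qed
  have "c - ?S = (\<Sum>p\<in>supp c. of_int (c p) * (delta p - of_int (a p) * delta (u, Qc (y p))))"
    using lincomb_delta_self[OF c_fin] by (simp add: lincomb_def algebra_simps sum_subtractf)
  also have "\<dots> \<in> TR"
    using pure
    by (intro add_subgroup_sum[OF add_subgroup_trel] add_subgroup_of_int_mult[OF add_subgroup_trel])
  finally have "c - ?S \<in> TR" .
  moreover have "delta (u, Qc x) - ?S \<in> TR"
    unfolding x_def using D(2) y by (intro delta_sum_right) (simp_all add: u_def)
  ultimately have "c - delta (u, Qc x) \<in> TR"
    using add_subgroup_diff[OF add_subgroup_trel] by fastforce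
  moreover have "x \<in> augpow UNIV n"
    unfolding x_def using y
    by (intro add_subgroup_sum add_subgroup_of_int_mult add_subgroup_augpow subring_UNIV)
  ultimately show ?thesis using that D(1,2) by (simp add: u_def)
qed

lemma free_eval_delta_Qc:
  assumes "r \<in> R" "x \<in> augpow UNIV n"
  shows "free_eval (delta (r, Qc x)) - gsmul r (of_int \<circ> x) \<in> augpow R (Suc n)"
proof -
  have "free_eval (delta (r, Qc x)) - gsmul r (of_int \<circ> x) = gsmul r (of_int \<circ> (coset_rep (Qc x) - x))"
    by (simp add: free_eval_delta gsmul_def fun_eq_iff algebra_simps)
  also have "\<dots> \<in> augpow R (Suc n)"
    using assms coset_rep_Qc_diff by (intro augpow_gsmul[OF subring] augpow_of_int_comp[OF subring])
  finally show ?thesis .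
qed

lemma pure_tensor_trel:
  assumes D: "D > 0" "1 / of_int D \<in> R" and x: "x \<in> augpow UNIV n"
    and Dx: "gsmul (1 / of_int D) (of_int \<circ> x) \<in> augpow R (Suc n)"
  shows "delta (1 / of_int D, Qc x) \<in> TR"
proof -
  define u where "u = 1 / (of_int D :: rat)"
  obtain e :: int and w where e: "e > 0" "1 / of_int e \<in> R" "w \<in> augpow UNIV (Suc n)"
    "of_int e * gsmul u (of_int \<circ> x) = of_int \<circ> w"
    using augpow_clear_denominators[OF subring Dx] unfolding u_def by blast
  have ex: "of_int e * x = of_int D * w"
  proof
    fix g
    have "of_int e * (u * of_int (x g)) = (of_int (w g) :: rat)"
      using fun_cong[OF e(4), of g] by (simp add: gsmul_def)
    then have "(of_int (e * x g) :: rat) = of_int (D * w g)"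
      using D(1) by (simp add: u_def field_simps)
    then have "e * x g = D * w g" by (simp only: of_int_eq_iff)
    then show "(of_int e * x) g = (of_int D * w) g" by simp
  qed
  define v where "v = u / of_int e"
  have v: "v \<in> R" using inverse_of_int_mult_mem[OF subring D(2) e(2)] by (simp add: v_def u_def)
  have "Qc (of_int e * x) = Qc 0"
    using add_subgroup_of_int_mult[OF add_subgroup_augpow[OF subring_UNIV] e(3), of D]
    by (simp add: ex Qcoset_eq_iff[OF subring_UNIV])
  then have "delta (v, Qc (of_int e * x)) \<in> TR" using delta_Qc_zero[OF v] by simp
  let ?A = "delta (of_int e * v, Qc x) - of_int e * delta (v, Qc x)"
  let ?B = "delta (v, Qc (of_int e * x)) - of_int e * delta (v, Qc x)"
  have "delta (u, Qc x) = ?A - ?B + delta (v, Qc (of_int e * x))" using e(1) by (simp add: v_def)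
  also have "\<dots> \<in> TR"
    using delta_of_int_mult_left[OF v Qc_QZ[OF x], of e] delta_of_int_mult_right[OF v x, of e]
      \<open>delta (v, Qc (of_int e * x)) \<in> TR\<close>
    by (rule add_subgroup_add[OF add_subgroup_trel add_subgroup_diff[OF add_subgroup_trel]])
  finally show ?thesis unfolding u_def .
qed

lemma trel_if_free_eval_augpow_Suc:
  fixes c :: "'g::{finite,ab_group_add} formal_sum"
  assumes c: "c \<in> tfree R QZ" and ev: "free_eval c \<in> augpow R (Suc n)"
  shows "c \<in> TR"
proof -
  obtain D :: int and x where D: "D > 0" "1 / of_int D \<in> R" and x: "x \<in> augpow UNIV n"
    and cx: "c - delta (1 / of_int D, Qc x) \<in> TR"
    using tfree_equiv_pure_tensor[OF c] .
  let ?d = "delta (1 / of_int D, Qc x)"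
  have "free_eval c - free_eval (c - ?d) - (free_eval ?d - gsmul (1 / of_int D) (of_int \<circ> x))
      \<in> augpow R (Suc n)"
    using ev free_eval_trel[OF cx] free_eval_delta_Qc[OF D(2) x]
    by (rule add_subgroup_diff[OF add_subgroup_augpow[OF subring]
          add_subgroup_diff[OF add_subgroup_augpow[OF subring]]])
  then have "gsmul (1 / of_int D) (of_int \<circ> x) \<in> augpow R (Suc n)"
    using finite_supp_tfree[OF c] by (simp add: free_eval_diff)
  then have "?d \<in> TR" by (rule pure_tensor_trel[OF D x])
  with cx have "(c - ?d) + ?d \<in> TR" by (rule add_subgroup_add[OF add_subgroup_trel])
  then show "c \<in> TR" by simp
qed

lemma free_eval_onto_Qcoset:
  assumes y: "y \<in> augpow R n"
  obtains c :: "'g::{finite,ab_group_add} formal_sum"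
  where "c \<in> tfree R QZ" "Qcoset R n (free_eval c) = Qcoset R n y"
proof -
  obtain e :: int and w where e: "e > 0" "1 / of_int e \<in> R" "w \<in> augpow UNIV n"
    "of_int e * y = of_int \<circ> w"
    using augpow_clear_denominators[OF subring y] .
  have y_eq: "y g = 1 / of_int e * of_int (w g)" for g
    using fun_cong[OF e(4), of g] e(1) by (simp add: field_simps)
  let ?c = "delta (1 / of_int e, Qc w)"
  have "?c \<in> tfree R QZ" using e(2) Qc_QZ[OF e(3)] by (simp add: delta_tfree)
  moreover have "free_eval ?c - y = gsmul (1 / of_int e) (of_int \<circ> (coset_rep (Qc w) - w))"
    by (simp add: free_eval_delta gsmul_def fun_eq_iff y_eq algebra_simps)
  then have "free_eval ?c - y \<in> augpow R (Suc n)"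
    using e(2) coset_rep_Qc_diff[OF e(3)]
    by (simp add: augpow_gsmul[OF subring] augpow_of_int_comp[OF subring])
  ultimately show ?thesis using that Qcoset_eq_iff[OF subring] by blast
qed

lemma fval_tens_class:
  assumes "X \<in> tens R (QZ :: ('g::{finite,ab_group_add} \<Rightarrow> int) set set) Qadd" "c \<in> X" "c' \<in> X"
  shows "fval R n c = fval R n c'"
proof -
  obtain c0 where c0: "c0 \<in> tfree R QZ" "X = cls c0" using assms(1) by (auto simp: tens_def)
  show ?thesis using assms(2,3) unfolding c0(2) by (simp add: fval_tcls[OF c0(1)])
qed

lemma tcls_eq_if_Qcoset_free_eval_eq:
  fixes c c' :: "'g::{finite,ab_group_add} formal_sum"
  assumes c: "c \<in> tfree R QZ" "c' \<in> tfree R QZ"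
    and eq: "Qcoset R n (free_eval c) = Qcoset R n (free_eval c')"
  shows "cls c = cls c'"
proof -
  have "free_eval (c - c') \<in> augpow R (Suc n)"
    using eq finite_supp_tfree[OF c(1)] finite_supp_tfree[OF c(2)]
    by (simp add: Qcoset_eq_iff[OF subring] free_eval_diff)
  with add_subgroup_diff[OF add_subgroup_tfree c] have "c - c' \<in> TR"
    by (rule trel_if_free_eval_augpow_Suc)
  then show ?thesis by (simp add: tcls_eq_iff)
qed

lemma bij_betw_Fmap_tens:
  "bij_betw (Fmap R n) (tens R (QZ :: ('g::{finite,ab_group_add} \<Rightarrow> int) set set) Qadd) (Qn R n)"
proof (rule bij_betw_imageI)
  show "inj_on (Fmap R n) (tens R (QZ :: ('g \<Rightarrow> int) set set) Qadd)"
  proof (rule inj_onI)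
    fix X Y :: "'g formal_sum set"
    assume "X \<in> tens R QZ Qadd" "Y \<in> tens R QZ Qadd" and eq: "Fmap R n X = Fmap R n Y"
    then obtain c c' where c: "c \<in> tfree R QZ" "c' \<in> tfree R QZ" "X = cls c" "Y = cls c'"
      by (auto simp: tens_def)
    with eq have "Qcoset R n (free_eval c) = Qcoset R n (free_eval c')" by (simp add: Fmap_tcls)
    with tcls_eq_if_Qcoset_free_eval_eq[OF c(1,2)] c(3,4) show "X = Y" by simp
  qed
next
  show "Fmap R n ` tens R (QZ :: ('g \<Rightarrow> int) set set) Qadd = Qn R n"
  proof (intro set_eqI iffI)
    fix q :: "('g \<Rightarrow> rat) set" assume "q \<in> Fmap R n ` tens R QZ Qadd"
    then obtain c where c: "c \<in> tfree R QZ" "q = Fmap R n (cls c)" by (auto simp: tens_def)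
    then have "q = Qcoset R n (free_eval c)" by (simp add: Fmap_tcls)
    with free_eval_tfree[OF c(1)] show "q \<in> Qn R n" unfolding Qn_def by blast
  next
    fix q :: "('g \<Rightarrow> rat) set" assume "q \<in> Qn R n"
    then obtain y where y: "y \<in> augpow R n" "q = Qcoset R n y" by (auto simp: Qn_def)
    obtain c :: "'g formal_sum"
      where c: "c \<in> tfree R QZ" "Qcoset R n (free_eval c) = Qcoset R n y"
      using free_eval_onto_Qcoset[OF y(1)] .
    have "q = Fmap R n (cls c)" using c y(2) by (simp add: Fmap_tcls)
    moreover have "cls c \<in> tens R QZ Qadd" using c(1) by (simp add: tens_def)
    ultimately show "q \<in> Fmap R n ` tens R QZ Qadd" by blast
  qed
qed

lemma Fmap_tadd:
  assumes "X \<in> tens R (QZ :: ('g::{finite,ab_group_add} \<Rightarrow> int) set set) Qadd"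
    "Y \<in> tens R QZ Qadd"
  shows "Fmap R n (tadd X Y) = Qadd (Fmap R n X) (Fmap R n Y)"
proof -
  obtain c c' where c: "c \<in> tfree R QZ" "c' \<in> tfree R QZ" "X = cls c" "Y = cls c'"
    using assms by (auto simp: tens_def)
  have "Fmap R n (tadd X Y) = Qcoset R n (free_eval (c + c'))"
    using c add_subgroup_add[OF add_subgroup_tfree c(1,2)] by (simp add: tadd_tcls Fmap_tcls)
  also have "\<dots> = Qadd (Fmap R n X) (Fmap R n Y)"
    using c finite_supp_tfree[OF c(1)] finite_supp_tfree[OF c(2)]
    by (simp add: free_eval_add Fmap_tcls Qadd_Qcoset[OF subring])
  finally show ?thesis .
qed

lemma Fmap_tsmul:
  assumes "s \<in> R" "X \<in> tens R (QZ :: ('g::{finite,ab_group_add} \<Rightarrow> int) set set) Qadd"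
  shows "Fmap R n (tsmul R QZ Qadd s X) = Qsmul R n s (Fmap R n X)"
proof -
  obtain c where c: "c \<in> tfree R QZ" "X = cls c" using assms(2) by (auto simp: tens_def)
  have "supp (tsm s c) \<subseteq> (\<lambda>p. (s * fst p, snd p)) ` supp c"
    unfolding tsm_eq_lincomb by (rule supp_lincomb_delta)
  moreover have "(\<lambda>p. (s * fst p, snd p)) ` supp c \<subseteq> R \<times> QZ"
    using c(1) subring_mult[OF subring assms(1)] by (auto simp: tfree_def)
  ultimately have "tsm s c \<in> tfree R QZ"
    using finite_subset[OF _ finite_imageI[OF finite_supp_tfree[OF c(1)]]] unfolding tfree_def by blast
  then have "Fmap R n (tsmul R QZ Qadd s X) = Qcoset R n (free_eval (tsm s c))"
    using c assms(1) by (simp add: tsmul_tcls Fmap_tcls)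
  also have "\<dots> = Qsmul R n s (Fmap R n X)"
    using c assms(1) finite_supp_tfree[OF c(1)]
    by (simp add: free_eval_tsm Fmap_tcls Qsmul_Qcoset[OF subring])
  finally show ?thesis .
qed

end

theorem lemma1p1:
  fixes R :: "rat set" and n :: nat
  assumes "subring_rat R"
  defines "M \<equiv> (Qn (UNIV :: int set) n :: ('g::{finite,ab_group_add} \<Rightarrow> int) set set)"
  defines "T \<equiv> tens R M Qadd"
  shows "(\<forall>X\<in>T. \<forall>c\<in>X. \<forall>c'\<in>X. fval R n c = fval R n c')
     \<and> bij_betw (Fmap R n) T (Qn R n)
     \<and> (\<forall>X\<in>T. \<forall>Y\<in>T. Fmap R n (tadd X Y) = Qadd (Fmap R n X) (Fmap R n Y))
     \<and> (\<forall>s\<in>R. \<forall>X\<in>T. Fmap R n (tsmul R M Qadd s X) = Qsmul R n s (Fmap R n X))"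
proof -
  interpret rat_tensor_Qn R n
    using assms(1) by unfold_locales (simp add: subring_rat_iff_subring)
  show ?thesis
  proof (intro conjI ballI)
    fix X c c' assume "X \<in> T" "c \<in> X" "c' \<in> X"
    then show "fval R n c = fval R n c'" unfolding T_def M_def by (rule fval_tens_class)
  next
    show "bij_betw (Fmap R n) T (Qn R n)" unfolding T_def M_def by (rule bij_betw_Fmap_tens)
  next
    fix X Y assume "X \<in> T" "Y \<in> T"
    then show "Fmap R n (tadd X Y) = Qadd (Fmap R n X) (Fmap R n Y)"
      unfolding T_def M_def by (rule Fmap_tadd)
  next
    fix s X assume "s \<in> R" "X \<in> T"
    then show "Fmap R n (tsmul R M Qadd s X) = Qsmul R n s (Fmap R n X)"
      unfolding T_def M_def by (rule Fmap_tsmul)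
  qed
qed

end
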